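(* Let $\mathcal{T}_{5,1}$ be the set of $s\in\mathcal{A}^*$ with $|s|\ne\mathsf{rmin}(s)+1$, $\mathrm{sebr}(s)\ne0$, $\mathrm{sebr}(s)>\mathrm{Rmin}(s)_{\mathsf{rpos}(s)+1}$ and $\mathrm{Prm}(s)_{\mathsf{rpos}(s)+1}=\mathrm{Prm}(s)_{\mathsf{rpos}(s)}+1$. For every $n$ there is a bijection $f_{5,1}$ from $\mathcal{T}_{5,1}\cap\mathcal{A}_n$ onto the set of $s\in\mathcal{A}_n$ such that $\mathsf{rpos}(s)\ne0$, the rightmost occurrence of $\mathrm{Rmin}(s)_{\mathsf{rpos}(s)-1}$ is adjacent to the second rightmost occurrence of $\mathrm{Rmin}(s)_{\mathsf{rpos}(s)}$, and the two rightmost occurrences of $\mathrm{Rmin}(s)_{\mathsf{rpos}(s)}$ are not adjacent and have no $\mathcal{M}$asc between them. Moreover for all $s$: $\mathsf{asc},\mathsf{rep},\mathsf{max},\mathsf{ealm},\mathsf{rmin}$ take equal values on $s$ and $f_{5,1}(s)$, $\mathsf{rpos}(s)=\mathsf{rpos}(f_{5,1}(s))-1$, and $\mathsf{zero}(s)=\mathsf{zero}(f_{5,1}(s))+\chi(\mathsf{rpos}(s)=0)$.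
   Context: For a sequence $s$, $\mathsf{asc}(s)=|\{i:s_i<s_{i+1}\}|$. An ascent sequence is a sequence $s=(s_1,\dots,s_n)$ of non-negative integers with $s_1=0$, $s_i\le\mathsf{asc}(s_1,\dots,s_{i-1})+1$ for $i\ge2$; $\mathcal{A}_n$ is the set of those of length $n$, $|s|$ the length; $\mathcal{A}^*$ is the set of all ascent sequences except those of the form $(0,1,\dots,|s|-1)$. $\mathsf{rep}(s)=|s|-|\{s_i\}|$; $\mathsf{zero}(s)=|\{i:s_i=0\}|$; $\mathsf{max}(s)=|\{i:s_i=i-1\}|$; $\mathsf{ealm}(s)=s_{\mathsf{max}(s)+1}$ if $\mathsf{max}(s)\ne|s|$, else $0$. A right-to-left minimum is an entry $s_i$ with $s_i<s_j$ for all $j>i$; $\mathsf{rmin}(s)$ is their number; they are indexed $0,\dots,\mathsf{rmin}(s)-1$ from left to right, with values $\mathrm{Rmin}(s)_m$ and positions $\mathrm{Prm}(s)_m$. $\mathsf{rpos}(s)$: $0$ if $\mathsf{rmin}(s)=|s|$; otherwise the maximal $m$ such that the value $\mathrm{Rmin}(s)_m$ occurs at least twice after position $\mathrm{Prm}(s)_{m-1}$ (for $m=0$: at least twice in $s$), and $0$ if none. $\mathrm{sebr}(s)$ is the smallest entry strictly between the two rightmost occurrences of $\mathrm{Rmin}(s)_{\mathsf{rpos}(s)}$, and $0$ if they are adjacent; when $\mathsf{rpos}(s)=\mathsf{rmin}(s)-1$ one regards $\mathrm{sebr}(s)<\mathrm{Rmin}(s)_{\mathsf{rpos}(s)+1}$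 as true. An entry $s_i$ is an $\mathcal{M}$asc if $s_i=\mathsf{asc}(s_1,\dots,s_{i-1})+1$. $\chi(P)=1$ if $P$ holds, else $0$. *)

theory Defs
  imports Main
begin

(* Sequences are lists of naturals; list index j (0-based) corresponds to paper position j+1. *)

definition asc :: "nat list \<Rightarrow> nat" where
  "asc s = card {i. Suc i < length s \<and> s ! i < s ! Suc i}"

definition is_ascent :: "nat list \<Rightarrow> bool" where
  "is_ascent s \<longleftrightarrow> s \<noteq> [] \<and> s ! 0 = 0 \<and>
     (\<forall>i. 1 \<le> i \<and> i < length s \<longrightarrow> s ! i \<le> asc (take i s) + 1)"

definition ascA :: "nat \<Rightarrow> nat list set" where
  "ascA n = {s. is_ascent s \<and> length s = n}"

definition ascAstar :: "nat list set" where
  "ascAstar = {s. is_ascent s \<and> s \<noteq> [0..<length s]}"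

definition rep :: "nat list \<Rightarrow> nat" where
  "rep s = length s - card (set s)"

definition zero :: "nat list \<Rightarrow> nat" where
  "zero s = card {i. i < length s \<and> s ! i = 0}"

(* paper: s_i = i - 1 with 1-based i; here s!j = j with 0-based j *)
definition maxst :: "nat list \<Rightarrow> nat" where
  "maxst s = card {j. j < length s \<and> s ! j = j}"

(* paper: s_{max(s)+1} (1-based) = s ! max(s) (0-based) *)
definition ealm :: "nat list \<Rightarrow> nat" where
  "ealm s = (if maxst s \<noteq> length s then s ! maxst s else 0)"

definition Prm :: "nat list \<Rightarrow> nat list" where
  "Prm s = filter (\<lambda>i. \<forall>j. i < j \<and> j < length s \<longrightarrow> s ! i < s ! j) [0..<length s]"

definition Rmin :: "nat list \<Rightarrow> nat list" where
  "Rmin s = map (\<lambda>i. s ! i) (Prm s)"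

definition rmin :: "nat list \<Rightarrow> nat" where
  "rmin s = length (Prm s)"

definition occ_after :: "nat list \<Rightarrow> nat \<Rightarrow> nat \<Rightarrow> nat" where
  "occ_after s m v = card {j. j < length s \<and> (m = 0 \<or> Prm s ! (m - 1) < j) \<and> s ! j = v}"

definition rpos :: "nat list \<Rightarrow> nat" where
  "rpos s = (if rmin s = length s then 0
     else if (\<exists>m < rmin s. 2 \<le> occ_after s m (Rmin s ! m))
       then (GREATEST m. m < rmin s \<and> 2 \<le> occ_after s m (Rmin s ! m))
       else 0)"

definition occs :: "nat list \<Rightarrow> nat \<Rightarrow> nat list" where
  "occs s v = filter (\<lambda>j. s ! j = v) [0..<length s]"

definition occ_last :: "nat list \<Rightarrow> nat \<Rightarrow> nat" where
  "occ_last s v = last (occs s v)"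

definition occ_2nd_last :: "nat list \<Rightarrow> nat \<Rightarrow> nat" where
  "occ_2nd_last s v = occs s v ! (length (occs s v) - 2)"

definition sebr :: "nat list \<Rightarrow> nat" where
  "sebr s = (let v = Rmin s ! rpos s; p1 = occ_2nd_last s v; p2 = occ_last s v in
     if length (occs s v) < 2 \<or> p2 = Suc p1 then 0
     else Min {s ! j | j. p1 < j \<and> j < p2})"

definition Masc :: "nat list \<Rightarrow> nat \<Rightarrow> bool" where
  "Masc s j \<longleftrightarrow> s ! j = asc (take j s) + 1"

(* T_{5,1}; the convention "sebr(s) < Rmin(s)_{rpos(s)+1} is true when rpos(s) = rmin(s)-1"
   makes the condition sebr(s) > Rmin(s)_{rpos(s)+1} require rpos(s)+1 < rmin(s). *)
definition T51 :: "nat list set" where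
  "T51 = {s \<in> ascAstar. length s \<noteq> rmin s + 1 \<and> sebr s \<noteq> 0 \<and>
      rpos s + 1 < rmin s \<and> sebr s > Rmin s ! (rpos s + 1) \<and>
      Prm s ! (rpos s + 1) = Prm s ! rpos s + 1}"

definition target51 :: "nat \<Rightarrow> nat list set" where
  "target51 n = {s \<in> ascA n. rpos s \<noteq> 0 \<and>
     (let q = occ_last s (Rmin s ! (rpos s - 1));
          v = Rmin s ! rpos s; p1 = occ_2nd_last s v; p2 = occ_last s v in
      (q = Suc p1 \<or> p1 = Suc q) \<and> p2 \<noteq> Suc p1 \<and>
      \<not> (\<exists>j. p1 < j \<and> j < p2 \<and> Masc s j))}"

end

theory Submission
  imports Defs
begin

text \<open>
  A sequence \<open>s\<close> of \<open>T51\<close> has the shape \<open>A u B u v C\<close>: the two displayed \<open>u\<close> are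
  the rightmost copies of \<open>u = Rmin(s)\<^sub>r\<close> with \<open>r = rpos s\<close>, the second one is
  immediately followed by the next right-to-left minimum \<open>v\<close>, and all entries of \<open>B\<close>
  (whose minimum is \<open>sebr s\<close>) and of \<open>C\<close> exceed \<open>v\<close>. Its image is \<open>f51 s = A u v B v C\<close>.
  This moves the ascent \<open>u < v\<close> in front of \<open>B\<close>: the number of ascents and every
  ascent-sequence constraint outside \<open>B\<close> are unchanged, while the bound for each entry of
  \<open>B\<close> grows by one, so the images are exactly the target sequences without an
  \<open>\<M>\<close>asc inside \<open>B\<close>. The right-to-left minima keep their values and only the position
  of \<open>u\<close> among them moves, so \<open>rmin\<close> is unchanged, while \<open>v\<close> now occurs twice after
  \<open>u\<close> and becomes the one that defines \<open>rpos\<close>. A zero is lost exactly when \<open>u = 0\<close>,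
  i.e. when \<open>r = 0\<close>; \<open>max\<close> and \<open>ealm\<close> only see the prefix \<open>A\<close>.
\<close>

lemma in_set_drop_iff: "x \<in> set (drop n s) \<longleftrightarrow> (\<exists>j. n \<le> j \<and> j < length s \<and> s ! j = x)"
proof
  assume "x \<in> set (drop n s)"
  then obtain i where "i < length s - n" "s ! (n + i) = x"
    by (auto simp: in_set_conv_nth)
  then show "\<exists>j. n \<le> j \<and> j < length s \<and> s ! j = x"
    by (intro exI[of _ "n + i"]) auto
next
  assume "\<exists>j. n \<le> j \<and> j < length s \<and> s ! j = x"
  then obtain j where "n \<le> j" "j < length s" "s ! j = x"
    by blast
  then show "x \<in> set (drop n s)"
    unfolding in_set_conv_nth by (intro exI[of _ "j - n"]) auto
qed

lemma in_set_drop_take_above: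
  assumes "\<And>x. i \<le> x \<Longrightarrow> x < j \<Longrightarrow> x < length s \<Longrightarrow> c < s ! x"
  shows "\<forall>y\<in>set (drop i (take j s)). c < y"
  using assms by (auto simp: in_set_drop_iff)

lemma split_at_two:
  assumes "i < j" "j < length s"
  shows "s = take i s @ [s ! i] @ drop (Suc i) (take j s) @ [s ! j] @ drop (Suc j) s"
proof -
  have "take j s = take i s @ [s ! i] @ drop (Suc i) (take j s)"
    using assms id_take_nth_drop[of i "take j s"] by simp
  moreover have "s = take j s @ [s ! j] @ drop (Suc j) s"
    using assms(2) id_take_nth_drop by simp
  ultimately show ?thesis
    by (metis append.assoc)
qed

subsection \<open>Ascents\<close>

lemma asc_Nil [simp]: "asc [] = 0"
  by (simp add: asc_def)

lemma asc_singleton [simp]: "asc [x] = 0"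
  by (simp add: asc_def)

lemma asc_Cons_Cons [simp]: "asc (x # y # zs) = (if x < y then 1 else 0) + asc (y # zs)"
proof -
  let ?S = "{i. Suc i < length (y # zs) \<and> (y # zs) ! i < (y # zs) ! Suc i}"
  have "{i. Suc i < length (x # y # zs) \<and> (x # y # zs) ! i < (x # y # zs) ! Suc i} =
        (if x < y then {0} else {}) \<union> Suc ` ?S"
    by (auto simp: image_iff less_Suc_eq_0_disj)
  moreover have "finite ?S"
    by (rule finite_subset[of _ "{..<length (y # zs)}"]) auto
  ultimately show ?thesis
    by (simp add: asc_def card_image)
qed

lemma asc_append:
  "asc (xs @ ys) = asc xs + asc ys + (if xs \<noteq> [] \<and> ys \<noteq> [] \<and> last xs < hd ys then 1 else 0)"
proof (induction xs rule: induct_list012)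
  case (2 x)
  then show ?case by (cases ys) auto
qed auto

lemma asc_Cons: "asc (x # ys) = asc ys + (if ys \<noteq> [] \<and> x < hd ys then 1 else 0)"
  using asc_append[of "[x]" ys] by simp

lemma asc_le_length: "asc xs \<le> length xs - 1"
  by (induction xs rule: induct_list012) auto

lemma asc_le_append: "asc xs \<le> asc (xs @ ys)"
  by (simp add: asc_append)

lemma asc_take_mono: "i \<le> j \<Longrightarrow> asc (take i s) \<le> asc (take j s)"
  using asc_le_append[of "take i s" "drop i (take j s)"] by (metis append_take_drop_id min.absorb1 take_take)

lemma asc_eq_length_imp_less:
  "asc xs = length xs - 1 \<Longrightarrow> Suc i < length xs \<Longrightarrow> xs ! i < xs ! Suc i"
proof (induction xs arbitrary: i rule: induct_list012)
  case (3 x y zs)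
  have "asc (y # zs) \<le> length zs"
    using asc_le_length[of "y # zs"] by simp
  with "3.prems"(1) have "x < y" and "asc (y # zs) = length (y # zs) - 1"
    by (auto split: if_splits)
  with "3.IH"(2) "3.prems"(2) show ?case
    by (cases i) auto
qed auto

lemma asc_insert_pair:
  assumes "u < v" "\<forall>x\<in>set Y. v < x"
  shows "asc (X @ [u, v] @ Y) = asc (X @ [u] @ Y) + 1"
  using assms asc_append[of "X @ [u]" Y] asc_append[of "X @ [u]" "v # Y"] asc_Cons[of v Y]
  by (cases Y) auto

text \<open>The shift \<open>u B u v \<mapsto> u v B v\<close> keeps the number of ascents: the ascent \<open>u < v\<close>
  moves from behind \<open>B\<close> to the front, and \<open>B\<close> is entered and left the same way.\<close>

lemma asc_shift:
  assumes "u < v" "Y \<noteq> []" "\<forall>x\<in>set Y. v < x"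
  shows "asc (X @ [u] @ Y @ [u, v] @ Z) = asc (X @ [u, v] @ Y @ [v] @ Z)"
proof -
  have "v < hd Y" "v < last Y"
    using assms by auto
  with assms(1) have Y: "u < hd Y" "v < hd Y" "\<not> last Y < u" "\<not> last Y < v"
    by auto
  have "asc (X @ [u] @ Y @ [u, v] @ Z) = asc (X @ [u]) + asc Y + 1 + asc (v # Z) + 1"
    using assms(1,2) Y asc_append[of "X @ [u]" "Y @ [u, v] @ Z"] asc_append[of Y "[u, v] @ Z"]
    by simp
  moreover have "asc (X @ [u, v] @ Y @ [v] @ Z) = asc (X @ [u]) + asc Y + 1 + asc (v # Z) + 1"
    using assms(1,2) Y asc_append[of "X @ [u]" "v # Y @ [v] @ Z"] asc_Cons[of v "Y @ [v] @ Z"]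
      asc_append[of Y "[v] @ Z"]
    by simp
  ultimately show ?thesis by simp
qed

lemma is_ascentD: "is_ascent s \<Longrightarrow> 0 < i \<Longrightarrow> i < length s \<Longrightarrow> s ! i \<le> asc (take i s) + 1"
  by (simp add: is_ascent_def)

lemma ascent_nth_le:
  assumes "is_ascent s" "i < length s"
  shows "s ! i \<le> i"
proof (cases i)
  case 0
  with assms(1) show ?thesis by (simp add: is_ascent_def)
next
  case (Suc i')
  with is_ascentD[OF assms(1)] assms(2) asc_le_length[of "take i s"] show ?thesis
    by fastforce
qed

text \<open>An entry \<open>s ! j = j\<close> attains the bound of \<open>ascent_nth_le\<close>, which forces the prefix
  before it to be strictly increasing.\<close>

lemma ascent_fixpoint_downward:
  assumes s: "is_ascent s" and j: "j < length s" "s ! j = j" and "i \<le> j"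
  shows "s ! i = i"
proof (cases "j = 0")
  case True
  with assms show ?thesis by simp
next
  case False
  have "j \<le> asc (take j s) + 1"
    using is_ascentD[OF s, of j] j False by simp
  with asc_le_length[of "take j s"] j have "asc (take j s) = length (take j s) - 1"
    by simp
  with j have step: "Suc m < j \<Longrightarrow> s ! m < s ! Suc m" for m
    using asc_eq_length_imp_less[of "take j s" m] by simp
  have "m \<le> s ! m" if "m \<le> j" for m
    using that
  proof (induction m)
    case (Suc m)
    then show ?case
      using step[of m] j by (cases "Suc m = j") auto
  qed simp
  with ascent_nth_le[OF s, of i] assms(4) j show ?thesis
    by (simp add: le_antisym)
qed

lemma ascent_fixpoints_below:
  assumes "is_ascent s" "s ! i \<noteq> i"
  shows "{j. j < length s \<and> s ! j = j} \<subseteq> {..<i}"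
proof
  fix j
  assume "j \<in> {j. j < length s \<and> s ! j = j}"
  then show "j \<in> {..<i}"
    using ascent_fixpoint_downward[OF assms(1), of j i] assms(2) by (cases "i \<le> j") auto
qed

subsection \<open>Right-to-left minima\<close>

definition rtl_min_at :: "nat list \<Rightarrow> nat \<Rightarrow> bool" where
  "rtl_min_at s i \<longleftrightarrow> i < length s \<and> (\<forall>j. i < j \<and> j < length s \<longrightarrow> s ! i < s ! j)"

lemma Prm_eq_filter: "Prm s = filter (rtl_min_at s) [0..<length s]"
  unfolding Prm_def rtl_min_at_def by (rule filter_cong) auto

lemma set_Prm: "set (Prm s) = {i. rtl_min_at s i}"
  by (auto simp: Prm_eq_filter rtl_min_at_def)

lemma sorted_wrt_Prm: "sorted_wrt (<) (Prm s)"
  by (simp add: Prm_eq_filter sorted_wrt_filter)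

lemma distinct_Prm: "distinct (Prm s)"
  using sorted_wrt_Prm strict_sorted_iff by blast

lemma rmin_eq_card: "rmin s = card {i. rtl_min_at s i}"
  unfolding rmin_def using distinct_card[OF distinct_Prm] set_Prm by metis

lemma rtl_min_at_iff_drop:
  "rtl_min_at s i \<longleftrightarrow> i < length s \<and> (\<forall>x\<in>set (drop (Suc i) s). s ! i < x)"
proof -
  have "(\<forall>x\<in>set (drop (Suc i) s). s ! i < x) \<longleftrightarrow> (\<forall>j. i < j \<and> j < length s \<longrightarrow> s ! i < s ! j)"
    unfolding Ball_def in_set_drop_iff Suc_le_eq by blast
  then show ?thesis
    by (simp add: rtl_min_at_def)
qed

lemma rtl_min_at_Prm_nth: "m < rmin s \<Longrightarrow> rtl_min_at s (Prm s ! m)"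
  using nth_mem[of m "Prm s"] set_Prm[of s] unfolding rmin_def by auto

lemma Prm_nth_less_length: "m < rmin s \<Longrightarrow> Prm s ! m < length s"
  using rtl_min_at_Prm_nth rtl_min_at_def by blast

lemma Prm_nth_strict_mono: "m < m' \<Longrightarrow> m' < rmin s \<Longrightarrow> Prm s ! m < Prm s ! m'"
  using sorted_wrt_nth_less[OF sorted_wrt_Prm] unfolding rmin_def by blast

lemma Prm_nth_less_iff: "m < rmin s \<Longrightarrow> m' < rmin s \<Longrightarrow> Prm s ! m < Prm s ! m' \<longleftrightarrow> m < m'"
  by (metis Prm_nth_strict_mono linorder_neqE_nat order_less_asym)

lemma Prm_nth_inj: "m < rmin s \<Longrightarrow> m' < rmin s \<Longrightarrow> Prm s ! m = Prm s ! m' \<Longrightarrow> m = m'"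
  using nth_eq_iff_index_eq[OF distinct_Prm, of m s m'] by (simp add: rmin_def)

lemma rtl_min_at_obtain_index:
  assumes "rtl_min_at s i"
  obtains m where "m < rmin s" "Prm s ! m = i"
  using assms set_Prm[of s] unfolding rmin_def by (metis in_set_conv_nth mem_Collect_eq)

lemma Rmin_nth: "m < rmin s \<Longrightarrow> Rmin s ! m = s ! (Prm s ! m)"
  unfolding Rmin_def rmin_def by simp

lemma length_Rmin: "length (Rmin s) = rmin s"
  unfolding Rmin_def rmin_def by simp

lemma Rmin_strict_mono: "m < m' \<Longrightarrow> m' < rmin s \<Longrightarrow> Rmin s ! m < Rmin s ! m'"
  using rtl_min_at_Prm_nth[of m s] Prm_nth_strict_mono[of m m' s] Prm_nth_less_length[of m' s]
  by (simp add: Rmin_nth rtl_min_at_def)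

lemma rtl_min_at_below:
  "j < length s \<Longrightarrow> \<exists>i. j \<le> i \<and> rtl_min_at s i \<and> s ! i \<le> s ! j"
proof (induction "length s - j" arbitrary: j rule: less_induct)
  case less
  show ?case
  proof (cases "rtl_min_at s j")
    case False
    then obtain j' where j': "j < j'" "j' < length s" "s ! j' \<le> s ! j"
      using less.prems unfolding rtl_min_at_def by (auto simp: not_less)
    moreover have "length s - j' < length s - j"
      using j' by simp
    then obtain i where "j' \<le> i" "rtl_min_at s i" "s ! i \<le> s ! j'"
      using less.hyps[OF _ j'(2)] by blast
    ultimately show ?thesis
      by (intro exI[of _ i]) auto
  qed blast
qed

text \<open>The smallest entry to the right of a smaller entry would be a right-to-left minimum
  strictly between the two consecutive ones.\<close>

lemma Rmin_Suc_le_between: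
  assumes m: "Suc m < rmin s" and j: "Prm s ! m < j" "j < Prm s ! Suc m"
  shows "Rmin s ! Suc m \<le> s ! j"
proof -
  have "j < length s"
    using j Prm_nth_less_length[OF m] by simp
  then obtain i where i: "j \<le> i" "rtl_min_at s i" "s ! i \<le> s ! j"
    using rtl_min_at_below by blast
  have "\<not> i < Prm s ! Suc m"
  proof
    assume "i < Prm s ! Suc m"
    moreover obtain m' where m': "m' < rmin s" "Prm s ! m' = i"
      using i(2) by (rule rtl_min_at_obtain_index)
    moreover have "m < rmin s"
      using m by simp
    ultimately have "m < m'" "m' < Suc m"
      using Prm_nth_less_iff[of m s m'] Prm_nth_less_iff[OF m'(1) m] j i(1) by auto
    then show False by simp
  qed
  then have "s ! (Prm s ! Suc m) \<le> s ! i"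
    using i(2) rtl_min_at_Prm_nth[OF m] unfolding rtl_min_at_def
    by (cases "i = Prm s ! Suc m") (auto simp: less_imp_le)
  with i(3) show ?thesis
    by (simp add: Rmin_nth[OF m])
qed

lemma Rmin_nth_0:
  assumes s: "is_ascent s" and r: "0 < rmin s"
  shows "Rmin s ! 0 = 0"
proof -
  have "0 < length s" "s ! 0 = 0"
    using s by (auto simp: is_ascent_def)
  then obtain i where i: "rtl_min_at s i" "s ! i = 0"
    using rtl_min_at_below[of 0 s] by auto
  obtain m where m: "m < rmin s" "Prm s ! m = i"
    using i(1) by (rule rtl_min_at_obtain_index)
  have "Rmin s ! 0 \<le> Rmin s ! m"
    using Rmin_strict_mono[OF _ m(1)] by (cases m) (auto simp: less_imp_le)
  with i m show ?thesis
    by (simp add: Rmin_nth)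
qed

lemma rpos_eq_Greatest:
  assumes "rmin s \<noteq> length s" "\<exists>m < rmin s. 2 \<le> occ_after s m (Rmin s ! m)"
  shows "rpos s = (GREATEST m. m < rmin s \<and> 2 \<le> occ_after s m (Rmin s ! m))"
  using assms by (simp add: rpos_def)

lemma occ_after_less_2_above_rpos:
  assumes "rmin s \<noteq> length s" "rpos s < m" "m < rmin s"
  shows "occ_after s m (Rmin s ! m) < 2"
proof (rule ccontr)
  assume "\<not> ?thesis"
  with assms(3) have m: "m < rmin s \<and> 2 \<le> occ_after s m (Rmin s ! m)"
    by simp
  then have ex: "\<exists>m < rmin s. 2 \<le> occ_after s m (Rmin s ! m)"
    by blast
  have "m \<le> rpos s"
    unfolding rpos_eq_Greatest[OF assms(1) ex]
    by (rule Greatest_le_nat[where b = "rmin s"]) (use m in auto)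
  with assms(2) show False by simp
qed

lemma rpos_nonzero_imp:
  assumes "rpos s \<noteq> 0"
  shows "rmin s \<noteq> length s" "rpos s < rmin s" "2 \<le> occ_after s (rpos s) (Rmin s ! rpos s)"
proof -
  show ne: "rmin s \<noteq> length s"
    using assms by (auto simp: rpos_def)
  have ex: "\<exists>m < rmin s. 2 \<le> occ_after s m (Rmin s ! m)"
    using assms by (auto simp: rpos_def split: if_splits)
  have "rpos s < rmin s \<and> 2 \<le> occ_after s (rpos s) (Rmin s ! rpos s)"
    unfolding rpos_eq_Greatest[OF ne ex]
    by (rule GreatestI_ex_nat[where b = "rmin s"]) (use ex in auto)
  then show "rpos s < rmin s" "2 \<le> occ_after s (rpos s) (Rmin s ! rpos s)"
    by auto
qed

lemma rpos_eqI:
  assumes "rmin s \<noteq> length s" "r < rmin s" "2 \<le> occ_after s r (Rmin s ! r)"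
    and above: "\<And>m. r < m \<Longrightarrow> m < rmin s \<Longrightarrow> occ_after s m (Rmin s ! m) < 2"
  shows "rpos s = r"
proof -
  have "(GREATEST m. m < rmin s \<and> 2 \<le> occ_after s m (Rmin s ! m)) = r"
    using assms(2,3) above by (intro Greatest_equality) (auto, meson leI less_le_not_le)
  with assms(1-3) show ?thesis
    by (subst rpos_eq_Greatest) auto
qed

subsection \<open>Rightmost occurrences\<close>

lemma set_occs: "set (occs s a) = {j. j < length s \<and> s ! j = a}"
  by (auto simp: occs_def)

lemma sorted_wrt_occs: "sorted_wrt (<) (occs s a)"
  by (simp add: occs_def sorted_wrt_filter)

lemma occ_last_greatest:
  assumes "x < length s" "s ! x = a"
  shows "x \<le> occ_last s a" "occ_last s a < length s" "s ! occ_last s a = a"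
proof -
  let ?o = "occs s a"
  have x: "x \<in> set ?o"
    using assms by (simp add: set_occs)
  then have ne: "?o \<noteq> []" by auto
  then show "occ_last s a < length s" "s ! occ_last s a = a"
    using last_in_set[OF ne] by (auto simp: occ_last_def set_occs)
  obtain i where "i < length ?o" "?o ! i = x"
    using x by (auto simp: in_set_conv_nth)
  then show "x \<le> occ_last s a"
    using sorted_nth_mono[OF strict_sorted_imp_sorted[OF sorted_wrt_occs[of s a]], of i "length ?o - 1"]
    by (simp add: occ_last_def last_conv_nth[OF ne])
qed

lemma occ_2nd_last_less:
  assumes "2 \<le> length (occs s a)"
  shows "occ_2nd_last s a < occ_last s a" "s ! occ_2nd_last s a = a"
proof -
  let ?o = "occs s a"
  have ne: "?o \<noteq> []" and idx: "length ?o - 2 < length ?o - 1" "length ?o - 1 < length ?o"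
    using assms by auto
  show "occ_2nd_last s a < occ_last s a"
    using sorted_wrt_nth_less[OF sorted_wrt_occs idx]
    by (simp add: occ_2nd_last_def occ_last_def last_conv_nth[OF ne])
  have "?o ! (length ?o - 2) \<in> set ?o"
    using idx by simp
  then show "s ! occ_2nd_last s a = a"
    by (simp add: occ_2nd_last_def set_occs)
qed

lemma occ_le_occ_2nd_last:
  assumes "x < length s" "s ! x = a" "x \<noteq> occ_last s a"
  shows "x \<le> occ_2nd_last s a" "2 \<le> length (occs s a)"
proof -
  let ?o = "occs s a"
  have x: "x \<in> set ?o"
    using assms by (simp add: set_occs)
  then have ne: "?o \<noteq> []" by auto
  obtain i where i: "i < length ?o" "?o ! i = x"
    using x by (auto simp: in_set_conv_nth)
  have "i \<noteq> length ?o - 1"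
    using i assms(3) by (auto simp: occ_last_def last_conv_nth[OF ne])
  with i have "i \<le> length ?o - 2" "2 \<le> length ?o"
    by auto
  then show "x \<le> occ_2nd_last s a" "2 \<le> length ?o"
    using sorted_nth_mono[OF strict_sorted_imp_sorted[OF sorted_wrt_occs[of s a]], of i "length ?o - 2"] i
    by (simp_all add: occ_2nd_last_def)
qed

lemma occ_last_eqI:
  assumes "j < length s" "s ! j = a" "\<And>x. j < x \<Longrightarrow> x < length s \<Longrightarrow> s ! x \<noteq> a"
  shows "occ_last s a = j"
  using occ_last_greatest[OF assms(1,2)] assms(3)[of "occ_last s a"]
  by (cases "j = occ_last s a") auto

lemma occ_last_rtl_min_at: "rtl_min_at s p \<Longrightarrow> occ_last s (s ! p) = p"
  by (rule occ_last_eqI) (auto simp: rtl_min_at_def)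

lemma occ_2nd_last_eqI:
  assumes "i < j" "j < length s" "s ! i = a" "s ! j = a"
    and between: "\<And>x. i < x \<Longrightarrow> x < j \<Longrightarrow> s ! x \<noteq> a"
    and after: "\<And>x. j < x \<Longrightarrow> x < length s \<Longrightarrow> s ! x \<noteq> a"
  shows "occ_last s a = j" "occ_2nd_last s a = i" "2 \<le> length (occs s a)"
proof -
  show last: "occ_last s a = j"
    using assms by (intro occ_last_eqI) auto
  show two: "2 \<le> length (occs s a)"
    using occ_le_occ_2nd_last(2)[of i s a] assms(1-3) last by simp
  have "i \<le> occ_2nd_last s a"
    using occ_le_occ_2nd_last(1)[of i s a] assms(1-3) last by simp
  then show "occ_2nd_last s a = i"
    using occ_2nd_last_less[OF two] last between[of "occ_2nd_last s a"]
    by (cases "i = occ_2nd_last s a") auto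
qed

lemma occ_2nd_last_Rmin_Suc:
  assumes m: "Suc m < rmin s" and two: "2 \<le> occ_after s (Suc m) (Rmin s ! Suc m)"
  defines "v \<equiv> Rmin s ! Suc m"
  shows "Prm s ! m < occ_2nd_last s v" "occ_2nd_last s v < Prm s ! Suc m" "s ! occ_2nd_last s v = v"
    "occ_last s v = Prm s ! Suc m"
proof -
  let ?X = "{j. j < length s \<and> (Suc m = 0 \<or> Prm s ! (Suc m - 1) < j) \<and> s ! j = v}"
  show last: "occ_last s v = Prm s ! Suc m"
    using occ_last_rtl_min_at[OF rtl_min_at_Prm_nth[OF m]] Rmin_nth[OF m] by (simp add: v_def)
  have "\<not> ?X \<subseteq> {Prm s ! Suc m}"
    using two card_mono[of "{Prm s ! Suc m}" ?X] by (auto simp: occ_after_def v_def)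
  then obtain x where x: "x < length s" "Prm s ! m < x" "s ! x = v" "x \<noteq> occ_last s v"
    using last by auto
  then have "x \<le> occ_2nd_last s v" "2 \<le> length (occs s v)"
    using occ_le_occ_2nd_last by simp_all
  with x(2) occ_2nd_last_less[of s v] last
  show "Prm s ! m < occ_2nd_last s v" "occ_2nd_last s v < Prm s ! Suc m" "s ! occ_2nd_last s v = v"
    by simp_all
qed

lemma Rmin_Suc_less_between_occs:
  assumes m: "Suc m < rmin s" and two: "2 \<le> occ_after s (Suc m) (Rmin s ! Suc m)"
    and x: "occ_2nd_last s (Rmin s ! Suc m) < x" "x < Prm s ! Suc m"
  shows "Rmin s ! Suc m < s ! x"
proof -
  note occ = occ_2nd_last_Rmin_Suc[OF m two]
  have "Rmin s ! Suc m \<le> s ! x"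
    using Rmin_Suc_le_between[OF m] occ(1) x by simp
  moreover have "x < length s"
    using x Prm_nth_less_length[OF m] by simp
  then have "s ! x \<noteq> Rmin s ! Suc m"
    using occ_le_occ_2nd_last(1)[of x s] occ(4) x by fastforce
  ultimately show ?thesis
    by simp
qed

subsection \<open>The shift \<open>A u B u v C \<mapsto> A u v B v C\<close>\<close>

text \<open>\<open>S\<close> is the shape of a sequence of \<open>T51\<close> around the two rightmost copies of
  \<open>u = Rmin(s)\<^sub>r\<close>, \<open>r = rpos s\<close>, the second of which is followed by
  \<open>v = Rmin(s)\<^sub>r\<^sub>+\<^sub>1\<close>; \<open>T\<close> is its image under \<open>f51\<close>.\<close>

locale uv_shift =
  fixes A :: "nat list" and u v :: nat and B C :: "nat list"
  assumes u_less_v: "u < v" and B_nonempty: "B \<noteq> []"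
    and B_above: "\<forall>x\<in>set B. v < x" and C_above: "\<forall>x\<in>set C. v < x"

begin

abbreviation S where "S \<equiv> A @ [u] @ B @ [u, v] @ C"

abbreviation T where "T \<equiv> A @ [u, v] @ B @ [v] @ C"

abbreviation k where "k \<equiv> length A"

abbreviation l where "l \<equiv> length B"

lemma l_pos: "0 < l"
  using B_nonempty by simp

lemma hd_B_above: "v < hd B"
  using B_nonempty B_above by simp

lemma S_nth_seams: "S ! k = u" "S ! Suc k = hd B" "S ! (k + l + 1) = u" "S ! (k + l + 2) = v"
  using B_nonempty by (simp_all add: nth_append hd_conv_nth)

lemma T_nth_seams: "T ! k = u" "T ! Suc k = v" "T ! (k + l + 2) = v"
  by (simp_all add: nth_append)

lemma S_nth_B: "j < l \<Longrightarrow> S ! (k + Suc j) = B ! j"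
  by (simp add: nth_append)

lemma T_nth_B: "j < l \<Longrightarrow> T ! (k + Suc (Suc j)) = B ! j"
  by (simp add: nth_append)

lemma S_nth_C: "S ! (k + l + 3 + j) = C ! j"
  by (simp add: nth_append)

lemma T_S_nth_prefix: "i \<le> k \<Longrightarrow> T ! i = S ! i"
  by (cases "i = k") (simp_all add: nth_append)

lemma T_S_nth_suffix:
  assumes "k + l + 2 \<le> i"
  shows "T ! i = S ! i"
proof -
  obtain j where "i = k + l + 2 + j"
    using le_Suc_ex[OF assms] by blast
  then show ?thesis
    by (simp add: nth_append)
qed

lemma T_S_drop_suffix: "drop (k + l + 2 + j) T = drop (k + l + 2 + j) S"
  by (simp add: numeral_eq_Suc)

lemma S_position_cases:
  obtains "i \<le> k" | j where "j < l" "i = k + Suc j" | "i = k + l + 1" | "i = k + l + 2"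
    | j where "i = k + l + 3 + j"
proof -
  consider "i \<le> k" | "k < i" "i \<le> k + l" | "i = k + l + 1" | "i = k + l + 2" | "k + l + 3 \<le> i"
    by linarith
  then show thesis
  proof cases
    case 2
    then show thesis using that(2)[of "i - Suc k"] by simp
  next
    case 5
    then show thesis using that(5)[of "i - (k + l + 3)"] by simp
  qed (use that in auto)
qed

lemma T_position_cases:
  obtains "i \<le> k" | "i = Suc k" | j where "j < l" "i = k + Suc (Suc j)" | "i = k + l + 2"
    | j where "i = k + l + 3 + j"
proof -
  consider "i \<le> k" | "i = Suc k" | "Suc k < i" "i < k + l + 2" | "i = k + l + 2" | "k + l + 3 \<le> i"
    by linarith
  then show thesis
  proof cases
    case 3
    then show thesis using that(3)[of "i - Suc (Suc k)"] by simp
  next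
    case 5
    then show thesis using that(5)[of "i - (k + l + 3)"] by simp
  qed (use that in auto)
qed

lemma asc_T: "asc T = asc S"
  using asc_shift[OF u_less_v B_nonempty B_above, of A C] by simp

lemma ascent_at_prefix: "i \<le> k \<Longrightarrow> T ! i \<le> asc (take i T) + 1 \<longleftrightarrow> S ! i \<le> asc (take i S) + 1"
  using T_S_nth_prefix[of i] by simp

lemma ascent_at_suffix:
  "T ! (k + l + 3 + j) \<le> asc (take (k + l + 3 + j) T) + 1 \<longleftrightarrow>
   S ! (k + l + 3 + j) \<le> asc (take (k + l + 3 + j) S) + 1"
proof -
  have "asc (take (k + l + 3 + j) T) = asc (take (k + l + 3 + j) S)"
    using asc_shift[OF u_less_v B_nonempty B_above, of A "take j C"] by (simp add: numeral_eq_Suc)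
  moreover have "T ! (k + l + 3 + j) = S ! (k + l + 3 + j)"
    by (simp add: nth_append)
  ultimately show ?thesis by simp
qed

text \<open>Inserting \<open>v\<close> in front of \<open>B\<close> adds one ascent before every entry of \<open>B\<close>, so an entry
  of \<open>B\<close> is admissible in \<open>S\<close> iff it is admissible in \<open>T\<close> without being an \<open>\<M>\<close>asc there.\<close>

lemma ascent_at_B:
  assumes "j < l"
  shows "S ! (k + Suc j) \<le> asc (take (k + Suc j) S) + 1 \<longleftrightarrow>
    T ! (k + Suc (Suc j)) \<le> asc (take (k + Suc (Suc j)) T) + 1 \<and> \<not> Masc T (k + Suc (Suc j))"
proof -
  have "\<forall>x\<in>set (take j B). v < x"
    using B_above by (auto dest: in_set_takeD)
  then have "asc (take (k + Suc (Suc j)) T) = asc (take (k + Suc j) S) + 1"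
    using asc_insert_pair[OF u_less_v, of "take j B" A] assms by simp
  then show ?thesis
    unfolding Masc_def S_nth_B[OF assms] T_nth_B[OF assms] by linarith
qed

lemma ascent_at_first_B: "S ! Suc k \<le> asc (take (Suc k) S) + 1 \<longleftrightarrow> hd B \<le> asc (A @ [u]) + 1"
proof -
  have "take (Suc k) S = A @ [u]"
    by simp
  then show ?thesis
    by (simp only: S_nth_seams(2))
qed

lemma ascent_at_seams:
  assumes "hd B \<le> asc (A @ [u]) + 1"
  shows "T ! Suc k \<le> asc (take (Suc k) T) + 1" "S ! (k + l + 1) \<le> asc (take (k + l + 1) S) + 1"
    "S ! (k + l + 2) \<le> asc (take (k + l + 2) S) + 1" "T ! (k + l + 2) \<le> asc (take (k + l + 2) T) + 1"
proof -
  have below: "asc (A @ [u]) \<le> asc (take i S)" "asc (A @ [u]) \<le> asc (take i T)" if "k < i" for i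
    using asc_take_mono[of "Suc k" i S] asc_take_mono[of "Suc k" i T] that by simp_all
  have "v < asc (A @ [u]) + 1"
    using assms hd_B_above by simp
  with below[of "Suc k"] below[of "k + l + 1"] below[of "k + l + 2"] u_less_v
  show "T ! Suc k \<le> asc (take (Suc k) T) + 1" "S ! (k + l + 1) \<le> asc (take (k + l + 1) S) + 1"
    "S ! (k + l + 2) \<le> asc (take (k + l + 2) S) + 1" "T ! (k + l + 2) \<le> asc (take (k + l + 2) T) + 1"
    unfolding S_nth_seams T_nth_seams by simp_all
qed

lemma is_ascent_T_if_S:
  assumes S: "is_ascent S"
  shows "is_ascent T" "\<And>i. Suc k < i \<Longrightarrow> i < k + l + 2 \<Longrightarrow> \<not> Masc T i"
proof -
  have hd: "hd B \<le> asc (A @ [u]) + 1"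
    using is_ascentD[OF S, of "Suc k"] ascent_at_first_B by simp
  have B: "T ! (k + Suc (Suc j)) \<le> asc (take (k + Suc (Suc j)) T) + 1 \<and> \<not> Masc T (k + Suc (Suc j))"
    if "j < l" for j
    using ascent_at_B[OF that] is_ascentD[OF S, of "k + Suc j"] that by simp
  have "T ! i \<le> asc (take i T) + 1" if "0 < i" "i < length T" for i
  proof (cases i rule: T_position_cases)
    case 1
    then show ?thesis
      using ascent_at_prefix[OF 1] is_ascentD[OF S that(1)] that(2) by simp
  next
    case (3 j)
    then show ?thesis
      using B by simp
  next
    case (5 j)
    then show ?thesis
      using ascent_at_suffix[of j] is_ascentD[OF S, of i] that by simp
  qed (use ascent_at_seams[OF hd] in simp_all)
  moreover have "T ! 0 = S ! 0"
    by (rule T_S_nth_prefix) simp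
  ultimately show "is_ascent T"
    using S by (simp add: is_ascent_def)
  show "\<not> Masc T i" if "Suc k < i" "i < k + l + 2" for i
  proof -
    have "i = k + Suc (Suc (i - Suc (Suc k)))" "i - Suc (Suc k) < l"
      using that by auto
    then show ?thesis
      using B[of "i - Suc (Suc k)"] by metis
  qed
qed

lemma is_ascent_S_if_T:
  assumes T: "is_ascent T" and no_Masc: "\<And>i. Suc k < i \<Longrightarrow> i < k + l + 2 \<Longrightarrow> \<not> Masc T i"
  shows "is_ascent S"
proof -
  have B: "S ! (k + Suc j) \<le> asc (take (k + Suc j) S) + 1" if "j < l" for j
    using ascent_at_B[OF that] is_ascentD[OF T, of "k + Suc (Suc j)"] no_Masc that by simp
  have hd: "hd B \<le> asc (A @ [u]) + 1"
    using B[OF l_pos] ascent_at_first_B by simp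
  have "S ! i \<le> asc (take i S) + 1" if "0 < i" "i < length S" for i
  proof (cases i rule: S_position_cases)
    case 1
    then show ?thesis
      using ascent_at_prefix[OF 1] is_ascentD[OF T that(1)] that(2) by simp
  next
    case (2 j)
    then show ?thesis
      using B by simp
  next
    case (5 j)
    then show ?thesis
      using ascent_at_suffix[of j] is_ascentD[OF T, of i] that by simp
  qed (use ascent_at_seams[OF hd] in simp_all)
  moreover have "T ! 0 = S ! 0"
    by (rule T_S_nth_prefix) simp
  ultimately show ?thesis
    using T by (simp add: is_ascent_def)
qed

lemma S_nth_B_above:
  assumes "k < i" "i \<le> k + l"
  shows "v < S ! i"
proof -
  have "i = k + Suc (i - Suc k)" "i - Suc k < l"
    using assms by auto
  then show ?thesis
    using B_above nth_mem[of "i - Suc k" B] by (metis S_nth_B)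
qed

lemma T_nth_B_above:
  assumes "Suc k < i" "i \<le> k + l + 1"
  shows "v < T ! i"
proof -
  have "i = k + Suc (Suc (i - Suc (Suc k)))" "i - Suc (Suc k) < l"
    using assms by auto
  then show ?thesis
    using B_above nth_mem[of "i - Suc (Suc k)" B] by (metis T_nth_B)
qed

lemma S_T_nth_C_above:
  assumes "k + l + 2 < i" "i < length S"
  shows "v < S ! i" "v < T ! i"
proof -
  have "i = k + l + 3 + (i - (k + l + 3))" "i - (k + l + 3) < length C"
    using assms by auto
  then show "v < S ! i"
    using C_above nth_mem[of "i - (k + l + 3)" C] by (metis S_nth_C)
  moreover have "T ! i = S ! i"
    using assms(1) by (intro T_S_nth_suffix) simp
  ultimately show "v < T ! i"
    by simp
qed

lemma rtl_min_at_T_iff_prefix: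
  assumes "i < k"
  shows "rtl_min_at T i \<longleftrightarrow> rtl_min_at S i"
proof -
  have "set (drop (Suc i) T) = set (drop (Suc i) S)"
    using assms by auto
  moreover have "T ! i = S ! i"
    using assms T_S_nth_prefix[of i] by simp
  ultimately show ?thesis
    unfolding rtl_min_at_iff_drop by simp
qed

lemma rtl_min_at_T_iff_suffix: "rtl_min_at T (k + l + 2 + j) \<longleftrightarrow> rtl_min_at S (k + l + 2 + j)"
  using T_S_drop_suffix[of "Suc j"] T_S_nth_suffix[of "k + l + 2 + j"]
  unfolding rtl_min_at_iff_drop by simp

lemma rtl_min_at_T_k: "rtl_min_at T k"
  using u_less_v B_above C_above unfolding rtl_min_at_iff_drop by auto

lemma rtl_min_at_S_seams: "rtl_min_at S (k + l + 1)" "rtl_min_at S (k + l + 2)"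
proof -
  have "drop (Suc (k + l + 1)) S = v # C" "drop (Suc (k + l + 2)) S = C"
    by (simp_all add: numeral_eq_Suc)
  then show "rtl_min_at S (k + l + 1)" "rtl_min_at S (k + l + 2)"
    using u_less_v C_above unfolding rtl_min_at_iff_drop S_nth_seams by auto
qed

lemma not_rtl_min_at_S:
  assumes "k \<le> i" "i \<le> k + l"
  shows "\<not> rtl_min_at S i"
proof
  assume "rtl_min_at S i"
  moreover have "i < k + l + 1" "k + l + 1 < length S"
    using assms by simp_all
  ultimately have "S ! i < S ! (k + l + 1)"
    unfolding rtl_min_at_def by blast
  then have "S ! i < u"
    by (simp only: S_nth_seams(3))
  moreover have "u \<le> S ! i"
  proof (cases "i = k")
    case False
    then show ?thesis
      using S_nth_B_above[of i] assms u_less_v by simp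
  qed (use S_nth_seams(1) in simp)
  ultimately show False
    by simp
qed

lemma not_rtl_min_at_T:
  assumes "k < i" "i \<le> k + l + 1"
  shows "\<not> rtl_min_at T i"
proof
  assume "rtl_min_at T i"
  moreover have "i < k + l + 2" "k + l + 2 < length T"
    using assms by simp_all
  ultimately have "T ! i < T ! (k + l + 2)"
    unfolding rtl_min_at_def by blast
  then have "T ! i < v"
    by (simp only: T_nth_seams(3))
  moreover have "v \<le> T ! i"
  proof (cases "i = Suc k")
    case False
    then show ?thesis
      using T_nth_B_above[of i] assms by simp
  qed (use T_nth_seams(2) in simp)
  ultimately show False
    by simp
qed

lemma rtl_min_at_T_iff: "rtl_min_at T i \<longleftrightarrow> i = k \<or> (i \<noteq> k + l + 1 \<and> rtl_min_at S i)"
proof -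
  consider "i < k" | "i = k" | "k < i" "i \<le> k + l" | "i = k + l + 1" | "k + l + 2 \<le> i"
    by linarith
  then show ?thesis
  proof cases
    case 1
    then show ?thesis
      using rtl_min_at_T_iff_prefix by simp
  next
    case 2
    then show ?thesis
      using rtl_min_at_T_k by simp
  next
    case 3
    then show ?thesis
      using not_rtl_min_at_S not_rtl_min_at_T by simp
  next
    case 4
    then show ?thesis
      using not_rtl_min_at_T by simp
  next
    case 5
    then have "i = k + l + 2 + (i - (k + l + 2))"
      by simp
    then show ?thesis
      using rtl_min_at_T_iff_suffix[of "i - (k + l + 2)"] 5 by simp
  qed
qed

lemma rmin_S_le: "rmin S + 2 \<le> length S"
proof -
  have "{i. rtl_min_at S i} \<subseteq> {..<length S} - {k, Suc k}"
    using not_rtl_min_at_S[of k] not_rtl_min_at_S[of "Suc k"] l_pos by (auto simp: rtl_min_at_def)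
  then have "card {i. rtl_min_at S i} \<le> card ({..<length S} - {k, Suc k})"
    by (intro card_mono) auto
  then show ?thesis
    by (simp add: rmin_eq_card)
qed

lemma occs_S_u: "occ_last S u = k + l + 1" "occ_2nd_last S u = k" "2 \<le> length (occs S u)"
proof -
  have between: "S ! x \<noteq> u" if "k < x" "x < k + l + 1" for x
    using S_nth_B_above[of x] that u_less_v by simp
  have after: "S ! x \<noteq> u" if "k + l + 1 < x" "x < length S" for x
    using S_T_nth_C_above(1)[of x] S_nth_seams(4) that u_less_v by (cases "x = k + l + 2") auto
  show "occ_last S u = k + l + 1" "occ_2nd_last S u = k" "2 \<le> length (occs S u)"
    using occ_2nd_last_eqI[of k "k + l + 1" S u, OF _ _ S_nth_seams(1,3) between after] by simp_all
qed

lemma occs_T: "occ_last T u = k" "occ_2nd_last T v = Suc k" "occ_last T v = k + l + 2"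
proof -
  have "T ! x \<noteq> u" if x: "k < x" "x < length T" for x
  proof -
    consider "x = Suc k" | "Suc k < x" "x \<le> k + l + 1" | "x = k + l + 2" | "k + l + 2 < x"
      using x(1) by linarith
    then show ?thesis
      using T_nth_seams T_nth_B_above[of x] S_T_nth_C_above(2)[of x] x(2) u_less_v
      by cases auto
  qed
  then show "occ_last T u = k"
    using occ_last_eqI[of k T u] T_nth_seams(1) by simp
  have between: "T ! x \<noteq> v" if "Suc k < x" "x < k + l + 2" for x
    using T_nth_B_above[of x] that by simp
  have after: "T ! x \<noteq> v" if "k + l + 2 < x" "x < length T" for x
    using S_T_nth_C_above(2)[of x] that by simp
  show "occ_2nd_last T v = Suc k" "occ_last T v = k + l + 2"
    using occ_2nd_last_eqI[of "Suc k" "k + l + 2" T v, OF _ _ T_nth_seams(2,3) between after] by simp_all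
qed

lemma u_less_k:
  assumes "is_ascent S"
  shows "u < k"
proof -
  have "hd B \<le> Suc k"
    using ascent_nth_le[OF assms, of "Suc k"] S_nth_seams(2) by simp
  with hd_B_above u_less_v show ?thesis
    by simp
qed

lemma fixpoints_T:
  assumes "is_ascent S"
  shows "{j. j < length T \<and> T ! j = j} = {j. j < length S \<and> S ! j = j}"
proof -
  have "is_ascent T"
    by (rule is_ascent_T_if_S(1)[OF assms])
  then have "{j. j < length T \<and> T ! j = j} \<subseteq> {..<k}" "{j. j < length S \<and> S ! j = j} \<subseteq> {..<k}"
    using ascent_fixpoints_below[of T k] ascent_fixpoints_below[OF assms, of k]
      u_less_k[OF assms] T_nth_seams(1) S_nth_seams(1) by simp_all
  then show ?thesis
    using T_S_nth_prefix by (auto intro: less_imp_le)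
qed

lemma maxst_T: "is_ascent S \<Longrightarrow> maxst T = maxst S"
  unfolding maxst_def by (simp only: fixpoints_T)

lemma ealm_T:
  assumes "is_ascent S"
  shows "ealm T = ealm S"
proof -
  have "maxst S \<le> card {..<k}"
    unfolding maxst_def
    using ascent_fixpoints_below[OF assms, of k] u_less_k[OF assms] S_nth_seams(1)
    by (intro card_mono) simp_all
  then have "maxst S < length S" "T ! maxst S = S ! maxst S"
    using T_S_nth_prefix[of "maxst S"] by simp_all
  then show ?thesis
    using maxst_T[OF assms] by (simp add: ealm_def)
qed

lemma rep_T: "rep T = rep S"
proof -
  have "set T = set S"
    by auto
  then show ?thesis
    by (simp add: rep_def)
qed

lemma zero_S: "zero S = zero T + (if u = 0 then 1 else 0)"
proof -
  have "zero xs = length (filter (\<lambda>x. x = 0) xs)" for xs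
    unfolding zero_def length_filter_conv_card by simp
  then show ?thesis
    using u_less_v by simp
qed

end

text \<open>Here \<open>p1 < p\<close> are the positions of the two rightmost copies of \<open>u\<close>, so that
  \<open>f51 (A u B u v C) = A u v B v C\<close>; \<open>g51\<close> reverses this using the new positions of \<open>u\<close> and \<open>v\<close>.\<close>

definition f51 :: "nat list \<Rightarrow> nat list" where
  "f51 s = (let p = Prm s ! rpos s; p1 = occ_2nd_last s (s ! p) in
     take p1 s @ [s ! p, s ! Suc p] @ drop (Suc p1) (take p s) @ [s ! Suc p] @ drop (Suc (Suc p)) s)"

definition g51 :: "nat list \<Rightarrow> nat list" where
  "g51 t = (let q = Prm t ! (rpos t - 1); p2 = Prm t ! rpos t in
     take q t @ [t ! q] @ drop (Suc (Suc q)) (take p2 t) @ [t ! q, t ! p2] @ drop (Suc p2) t)"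

locale uv_shift_rmin = uv_shift +
  fixes r :: nat
  assumes r_less_rmin: "r < rmin S" and Prm_S_r: "Prm S ! r = k + l + 1"

begin

lemma Prm_S_Suc_r: "Suc r < rmin S" "Prm S ! Suc r = k + l + 2"
proof -
  obtain m where m: "m < rmin S" "Prm S ! m = k + l + 2"
    using rtl_min_at_S_seams(2) by (rule rtl_min_at_obtain_index)
  have "r < m"
    using Prm_nth_less_iff[OF r_less_rmin m(1)] Prm_S_r m(2) by simp
  moreover have "\<not> Suc r < m"
  proof
    assume "Suc r < m"
    then have "Prm S ! r < Prm S ! Suc r" "Prm S ! Suc r < Prm S ! m"
      using Prm_nth_strict_mono[of _ _ S] m(1) by auto
    with Prm_S_r m(2) show False
      by simp
  qed
  ultimately have "m = Suc r"
    by simp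
  with m show "Suc r < rmin S" "Prm S ! Suc r = k + l + 2"
    by simp_all
qed

lemma Prm_S_below_r:
  assumes "m < r"
  shows "Prm S ! m < k"
proof (rule ccontr)
  assume "\<not> Prm S ! m < k"
  moreover have "Prm S ! m < k + l + 1"
    using Prm_nth_strict_mono[OF assms r_less_rmin] Prm_S_r by simp
  moreover have "rtl_min_at S (Prm S ! m)"
    using assms r_less_rmin by (intro rtl_min_at_Prm_nth) simp
  ultimately show False
    using not_rtl_min_at_S[of "Prm S ! m"] by simp
qed

lemma Prm_S_above_r: "r < m \<Longrightarrow> m < rmin S \<Longrightarrow> k + l + 2 \<le> Prm S ! m"
  using Prm_nth_strict_mono[of "Suc r" m S] Prm_S_Suc_r by (cases "m = Suc r") auto

lemma sorted_wrt_Prm_S_update: "sorted_wrt (<) ((Prm S)[r := k])"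
  unfolding sorted_wrt_iff_nth_less
proof (intro allI impI)
  fix i j
  assume "i < j" "j < length ((Prm S)[r := k])"
  then have ij: "i < j" "j < rmin S" "j < length (Prm S)"
    by (simp_all add: rmin_def)
  consider "i = r" | "j = r" | "i \<noteq> r" "j \<noteq> r"
    by blast
  then show "(Prm S)[r := k] ! i < (Prm S)[r := k] ! j"
  proof cases
    case 1
    with ij have "(Prm S)[r := k] ! i = k" "(Prm S)[r := k] ! j = Prm S ! j"
      by simp_all
    with 1 ij Prm_S_above_r[of j] show ?thesis
      by simp
  next
    case 2
    with ij have "(Prm S)[r := k] ! i = Prm S ! i" "(Prm S)[r := k] ! j = k"
      by simp_all
    with 2 ij Prm_S_below_r[of i] show ?thesis
      by simp
  next
    case 3
    with ij Prm_nth_strict_mono[of i j S] show ?thesis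
      by simp
  qed
qed

lemma Prm_T: "Prm T = (Prm S)[r := k]"
proof (rule strict_sorted_equal[OF sorted_wrt_Prm_S_update sorted_wrt_Prm])
  have "set ((Prm S)[r := k]) = insert k (set (Prm S) - {k + l + 1})"
    using set_update_distinct[OF distinct_Prm, of r S k] r_less_rmin Prm_S_r by (simp add: rmin_def)
  also have "\<dots> = {i. rtl_min_at T i}"
    unfolding set_Prm using rtl_min_at_T_iff not_rtl_min_at_S[of k] by auto
  finally show "set (Prm T) = set ((Prm S)[r := k])"
    by (simp add: set_Prm)
qed

lemma rmin_T: "rmin T = rmin S"
  unfolding rmin_def Prm_T by simp

lemma Prm_T_nth: "m < rmin S \<Longrightarrow> Prm T ! m = (if m = r then k else Prm S ! m)"
  unfolding Prm_T by (simp add: rmin_def)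

lemma Rmin_S_r: "Rmin S ! r = u" "Rmin S ! Suc r = v"
  using Rmin_nth[OF r_less_rmin] Rmin_nth[OF Prm_S_Suc_r(1)] Prm_S_r Prm_S_Suc_r(2) S_nth_seams
  by simp_all

lemma Rmin_T: "Rmin T = Rmin S"
proof (rule nth_equalityI)
  show "length (Rmin T) = length (Rmin S)"
    using rmin_T by (simp add: length_Rmin)
next
  fix m
  assume "m < length (Rmin T)"
  then have m: "m < rmin S"
    using rmin_T by (simp add: length_Rmin)
  have "T ! (Prm T ! m) = S ! (Prm S ! m)"
  proof (cases m r rule: linorder_cases)
    case less
    then show ?thesis
      using Prm_T_nth[OF m] Prm_S_below_r[OF less] T_S_nth_prefix[of "Prm S ! m"] by simp
  next
    case equal
    then show ?thesis
      using Prm_T_nth[OF m] Prm_S_r T_nth_seams(1) S_nth_seams(3) by simp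
  next
    case greater
    then show ?thesis
      using Prm_T_nth[OF m] T_S_nth_suffix[OF Prm_S_above_r[OF greater m]] by simp
  qed
  then show "Rmin T ! m = Rmin S ! m"
    using Rmin_nth[OF m] Rmin_nth[of m T] m rmin_T by simp
qed

lemma occ_after_S_r: "2 \<le> occ_after S r u"
proof -
  let ?X = "{j. j < length S \<and> (r = 0 \<or> Prm S ! (r - 1) < j) \<and> S ! j = u}"
  have "r = 0 \<or> Prm S ! (r - 1) < k"
    using Prm_S_below_r[of "r - 1"] by (cases r) auto
  then have "{k, k + l + 1} \<subseteq> ?X"
    using S_nth_seams(1,3) by auto
  moreover have "finite ?X"
    by (rule finite_subset[of _ "{..<length S}"]) auto
  ultimately have "card {k, k + l + 1} \<le> card ?X"
    by (rule card_mono[rotated])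
  then show ?thesis
    by (simp add: occ_after_def)
qed

lemma occ_after_S_Suc_r: "occ_after S (Suc r) v < 2"
proof -
  let ?X = "{j. j < length S \<and> (Suc r = 0 \<or> Prm S ! (Suc r - 1) < j) \<and> S ! j = v}"
  have "?X \<subseteq> {k + l + 2}"
  proof
    fix j
    assume "j \<in> ?X"
    then have "j < length S" "k + l + 1 < j" "S ! j = v"
      using Prm_S_r by auto
    then show "j \<in> {k + l + 2}"
      using S_T_nth_C_above(1)[of j] by (cases "j = k + l + 2") auto
  qed
  then have "card ?X \<le> 1"
    using card_mono[of "{k + l + 2}" ?X] by simp
  then show ?thesis
    by (simp add: occ_after_def)
qed

lemma occ_after_T_Suc_r: "2 \<le> occ_after T (Suc r) v"
proof -
  let ?X = "{j. j < length T \<and> (Suc r = 0 \<or> Prm T ! (Suc r - 1) < j) \<and> T ! j = v}"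
  have "Prm T ! r = k"
    using Prm_T_nth[OF r_less_rmin] by simp
  then have "{Suc k, k + l + 2} \<subseteq> ?X"
    using T_nth_seams(2,3) by auto
  moreover have "finite ?X"
    by (rule finite_subset[of _ "{..<length T}"]) auto
  ultimately have "card {Suc k, k + l + 2} \<le> card ?X"
    by (rule card_mono[rotated])
  then show ?thesis
    by (simp add: occ_after_def)
qed

lemma occ_after_T_above_Suc_r:
  assumes "Suc r < m" "m < rmin S"
  shows "occ_after T m (Rmin T ! m) = occ_after S m (Rmin S ! m)"
proof -
  have "Prm T ! (m - 1) = Prm S ! (m - 1)" "k + l + 2 \<le> Prm S ! (m - 1)"
    using Prm_T_nth[of "m - 1"] Prm_S_above_r[of "m - 1"] assms by auto
  moreover have "T ! j = S ! j" if "Prm S ! (m - 1) < j" for j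
    using that \<open>k + l + 2 \<le> Prm S ! (m - 1)\<close> by (intro T_S_nth_suffix) simp
  ultimately have "{j. j < length T \<and> (m = 0 \<or> Prm T ! (m - 1) < j) \<and> T ! j = Rmin T ! m} =
      {j. j < length S \<and> (m = 0 \<or> Prm S ! (m - 1) < j) \<and> S ! j = Rmin S ! m}"
    using assms Rmin_T by auto
  then show ?thesis
    by (simp add: occ_after_def)
qed

lemma rpos_S_eq_iff: "rpos S = r \<longleftrightarrow> rpos T = Suc r"
proof
  assume S: "rpos S = r"
  show "rpos T = Suc r"
  proof (rule rpos_eqI)
    show "rmin T \<noteq> length T" "Suc r < rmin T"
      using rmin_S_le rmin_T Prm_S_Suc_r(1) by simp_all
    show "2 \<le> occ_after T (Suc r) (Rmin T ! Suc r)"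
      using occ_after_T_Suc_r Rmin_T Rmin_S_r(2) by simp
    show "occ_after T m (Rmin T ! m) < 2" if "Suc r < m" "m < rmin T" for m
      using that occ_after_T_above_Suc_r occ_after_less_2_above_rpos[of S m] rmin_S_le S rmin_T
      by simp
  qed
next
  assume T: "rpos T = Suc r"
  show "rpos S = r"
  proof (rule rpos_eqI)
    show "rmin S \<noteq> length S" "r < rmin S"
      using rmin_S_le r_less_rmin by simp_all
    show "2 \<le> occ_after S r (Rmin S ! r)"
      using occ_after_S_r Rmin_S_r(1) by simp
    show "occ_after S m (Rmin S ! m) < 2" if "r < m" "m < rmin S" for m
    proof (cases "m = Suc r")
      case True
      then show ?thesis
        using occ_after_S_Suc_r Rmin_S_r(2) by simp
    next
      case False
      with that show ?thesis
        using occ_after_T_above_Suc_r[of m] occ_after_less_2_above_rpos[of T m] rmin_S_le T rmin_T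
        by simp
    qed
  qed
qed

lemma sebr_S_above: "rpos S = r \<Longrightarrow> v < sebr S"
proof -
  assume rpos: "rpos S = r"
  have "sebr S = Min {S ! j |j. k < j \<and> j < k + l + 1}"
    unfolding sebr_def Let_def rpos Rmin_S_r(1) occs_S_u(1,2) using occs_S_u(3) l_pos by simp
  moreover have "finite {S ! j |j. k < j \<and> j < k + l + 1}"
    using finite_image_set[of "\<lambda>j. k < j \<and> j < k + l + 1" "\<lambda>j. S ! j"] by simp
  moreover have "S ! Suc k \<in> {S ! j |j. k < j \<and> j < k + l + 1}"
    using l_pos by auto
  moreover have "\<forall>x\<in>{S ! j |j. k < j \<and> j < k + l + 1}. v < x"
    using S_nth_B_above by auto
  ultimately show "v < sebr S"
    by (metis (no_types, lifting) Min_gr_iff empty_iff)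
qed

lemma S_in_T51:
  assumes "is_ascent S" "rpos S = r"
  shows "S \<in> T51"
proof -
  have "S \<noteq> [0..<length S]"
  proof
    assume "S = [0..<length S]"
    then have "distinct S"
      by (metis distinct_upt)
    then show False
      by simp
  qed
  then show ?thesis
    unfolding T51_def ascAstar_def
    using assms rmin_S_le sebr_S_above[OF assms(2)] Prm_S_Suc_r Rmin_S_r Prm_S_r by simp
qed

lemma T_in_target51:
  assumes "is_ascent S" "rpos S = r"
  shows "T \<in> target51 (length S)"
proof -
  have "is_ascent T" "\<forall>i. Suc k < i \<and> i < k + l + 2 \<longrightarrow> \<not> Masc T i"
    using is_ascent_T_if_S[OF assms(1)] by simp_all
  moreover have "rpos T = Suc r"
    using assms(2) rpos_S_eq_iff by simp
  moreover have "Rmin T ! r = u" "Rmin T ! Suc r = v"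
    using Rmin_T Rmin_S_r by simp_all
  ultimately show ?thesis
    unfolding target51_def ascA_def Let_def using occs_T l_pos by simp
qed

lemma f51_S: "rpos S = r \<Longrightarrow> f51 S = T"
proof -
  assume rpos: "rpos S = r"
  have "S ! Suc (k + l + 1) = v" "take (k + l + 1) S = A @ [u] @ B"
    "drop (Suc k) (A @ [u] @ B) = B" "drop (Suc (Suc (k + l + 1))) S = C"
    by (simp_all add: nth_append numeral_eq_Suc)
  then show ?thesis
    unfolding f51_def Let_def rpos Prm_S_r S_nth_seams(3) occs_S_u(2) by simp
qed

lemma g51_T: "rpos T = Suc r \<Longrightarrow> g51 T = S"
proof -
  assume rpos: "rpos T = Suc r"
  have Prm: "Prm T ! (Suc r - 1) = k" "Prm T ! Suc r = k + l + 2"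
    using Prm_T_nth[OF r_less_rmin] Prm_T_nth[OF Prm_S_Suc_r(1)] Prm_S_Suc_r(2) by simp_all
  have "take (k + l + 2) T = A @ [u, v] @ B" "drop (Suc (Suc k)) (A @ [u, v] @ B) = B"
    "drop (Suc (k + l + 2)) T = C"
    by (simp_all add: numeral_eq_Suc)
  then show ?thesis
    unfolding g51_def Let_def rpos Prm T_nth_seams by simp
qed

lemma u_eq_0_iff:
  assumes "is_ascent S"
  shows "u = 0 \<longleftrightarrow> r = 0"
  using Rmin_nth_0[OF assms] Rmin_strict_mono[OF _ r_less_rmin, of 0] Rmin_S_r(1) r_less_rmin
  by (cases r) auto

end

lemma uv_shift_S_split:
  assumes "i < j" "Suc j < length s" "j \<noteq> Suc i" "s ! i = s ! j" "s ! j < s ! Suc j"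
    and between: "\<And>x. i < x \<Longrightarrow> x < j \<Longrightarrow> s ! Suc j < s ! x"
    and after: "\<And>x. Suc j < x \<Longrightarrow> x < length s \<Longrightarrow> s ! Suc j < s ! x"
  shows "uv_shift (s ! i) (s ! Suc j) (drop (Suc i) (take j s)) (drop (Suc (Suc j)) s)"
    and "s = take i s @ [s ! i] @ drop (Suc i) (take j s) @ [s ! i, s ! Suc j] @ drop (Suc (Suc j)) s"
proof -
  show "uv_shift (s ! i) (s ! Suc j) (drop (Suc i) (take j s)) (drop (Suc (Suc j)) s)"
  proof
    show "s ! i < s ! Suc j" "drop (Suc i) (take j s) \<noteq> []"
      using assms(1-5) by simp_all
    show "\<forall>y\<in>set (drop (Suc i) (take j s)). s ! Suc j < y"
      using between by (intro in_set_drop_take_above) simp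
    show "\<forall>y\<in>set (drop (Suc (Suc j)) s). s ! Suc j < y"
      using after in_set_drop_take_above[of "Suc (Suc j)" "length s" s] by simp
  qed
  have "drop (Suc j) s = [s ! Suc j] @ drop (Suc (Suc j)) s"
    using assms(2) by (simp add: Cons_nth_drop_Suc)
  then show "s = take i s @ [s ! i] @ drop (Suc i) (take j s) @ [s ! i, s ! Suc j] @ drop (Suc (Suc j)) s"
    using split_at_two[OF assms(1) Suc_lessD[OF assms(2)]] assms(4) by simp
qed

lemma uv_shift_T_split:
  assumes "Suc (Suc i) < j" "j < length s" "s ! Suc i = s ! j" "s ! i < s ! j"
    and between: "\<And>x. Suc i < x \<Longrightarrow> x < j \<Longrightarrow> s ! j < s ! x"
    and after: "\<And>x. j < x \<Longrightarrow> x < length s \<Longrightarrow> s ! j < s ! x"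
  shows "uv_shift (s ! i) (s ! j) (drop (Suc (Suc i)) (take j s)) (drop (Suc j) s)"
    and "s = take i s @ [s ! i, s ! j] @ drop (Suc (Suc i)) (take j s) @ [s ! j] @ drop (Suc j) s"
proof -
  show "uv_shift (s ! i) (s ! j) (drop (Suc (Suc i)) (take j s)) (drop (Suc j) s)"
  proof
    show "s ! i < s ! j" "drop (Suc (Suc i)) (take j s) \<noteq> []"
      using assms(1-4) by simp_all
    show "\<forall>y\<in>set (drop (Suc (Suc i)) (take j s)). s ! j < y"
      using between by (intro in_set_drop_take_above) simp
    show "\<forall>y\<in>set (drop (Suc j) s). s ! j < y"
      using after in_set_drop_take_above[of "Suc j" "length s" s] by simp
  qed
  have "take (Suc i) s = take i s @ [s ! i]"
    using assms(1,2) by (simp add: take_Suc_conv_app_nth)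
  then show "s = take i s @ [s ! i, s ! j] @ drop (Suc (Suc i)) (take j s) @ [s ! j] @ drop (Suc j) s"
    using split_at_two[OF Suc_lessD[OF assms(1)] assms(2)] assms(3) by simp
qed

lemma T51_positions:
  assumes "s \<in> T51"
  defines "p \<equiv> Prm s ! rpos s"
  obtains p1 where "p1 < p" "Suc p < length s" "p \<noteq> Suc p1" "s ! p1 = s ! p" "s ! p < s ! Suc p"
    "\<And>x. p1 < x \<Longrightarrow> x < p \<Longrightarrow> s ! Suc p < s ! x"
    "\<And>x. Suc p < x \<Longrightarrow> x < length s \<Longrightarrow> s ! Suc p < s ! x"
proof -
  let ?r = "rpos s"
  have r: "Suc ?r < rmin s" and sebr: "sebr s \<noteq> 0" "Rmin s ! Suc ?r < sebr s"
    and Prm_Suc: "Prm s ! Suc ?r = Suc p"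
    using assms by (auto simp: T51_def)
  have Rmin: "Rmin s ! ?r = s ! p" "Rmin s ! Suc ?r = s ! Suc p"
    using Rmin_nth[of ?r s] Rmin_nth[OF r] r Prm_Suc by (simp_all add: p_def)
  have rm: "rtl_min_at s p" "rtl_min_at s (Suc p)"
    using rtl_min_at_Prm_nth[of ?r s] rtl_min_at_Prm_nth[OF r] r Prm_Suc by (simp_all add: p_def)
  define p1 where "p1 = occ_2nd_last s (s ! p)"
  have two: "2 \<le> length (occs s (s ! p))" and "p \<noteq> Suc p1"
    and sebr_Min: "sebr s = Min {s ! j |j. p1 < j \<and> j < p}"
    using sebr unfolding sebr_def Let_def Rmin(1) occ_last_rtl_min_at[OF rm(1)] p1_def
    by (auto split: if_splits)
  then have p1: "p1 < p" "s ! p1 = s ! p"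
    using occ_2nd_last_less[OF two] occ_last_rtl_min_at[OF rm(1)] by (simp_all add: p1_def)
  show thesis
  proof (rule that[OF p1(1) _ \<open>p \<noteq> Suc p1\<close> p1(2)])
    show "Suc p < length s" "s ! p < s ! Suc p"
      using rm Rmin Rmin_strict_mono[OF lessI r] by (simp_all add: rtl_min_at_def)
    show "s ! Suc p < s ! x" if "p1 < x" "x < p" for x
    proof -
      have "sebr s \<le> s ! x"
        unfolding sebr_Min using that by (intro Min_le) (auto simp: finite_image_set)
      with sebr(2) Rmin(2) show ?thesis
        by simp
    qed
    show "s ! Suc p < s ! x" if "Suc p < x" "x < length s" for x
      using rm(2) that by (simp add: rtl_min_at_def)
  qed
qed

lemma T51_decomp:
  assumes "s \<in> T51"
  obtains A u v B C where "uv_shift_rmin A u v B C (rpos s)" "s = A @ [u] @ B @ [u, v] @ C"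
proof -
  let ?p = "Prm s ! rpos s"
  obtain p1 where p1: "p1 < ?p" "Suc ?p < length s" "?p \<noteq> Suc p1" "s ! p1 = s ! ?p"
    "s ! ?p < s ! Suc ?p" "\<And>x. p1 < x \<Longrightarrow> x < ?p \<Longrightarrow> s ! Suc ?p < s ! x"
    "\<And>x. Suc ?p < x \<Longrightarrow> x < length s \<Longrightarrow> s ! Suc ?p < s ! x"
    using T51_positions[OF assms] by blast
  let ?A = "take p1 s" and ?B = "drop (Suc p1) (take ?p s)" and ?C = "drop (Suc (Suc ?p)) s"
  have shift: "uv_shift (s ! p1) (s ! Suc ?p) ?B ?C"
    using uv_shift_S_split(1)[OF p1(1-5)] p1(6,7) by blast
  have S: "?A @ [s ! p1] @ ?B @ [s ! p1, s ! Suc ?p] @ ?C = s"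
    using uv_shift_S_split(2)[OF p1(1-5)] p1(6,7) by metis
  have "uv_shift_rmin ?A (s ! p1) (s ! Suc ?p) ?B ?C (rpos s)"
  proof (rule uv_shift_rmin.intro[OF shift], unfold_locales, unfold S)
    show "rpos s < rmin s"
      using assms by (auto simp: T51_def)
    show "Prm s ! rpos s = length ?A + length ?B + 1"
      using p1(1,2) by simp
  qed
  then show thesis
    using S[symmetric] by (rule that)
qed

lemma target51_positions:
  assumes "t \<in> target51 n"
  defines "Q \<equiv> Prm t ! (rpos t - 1)" and "P \<equiv> Prm t ! rpos t"
  shows "Suc (Suc Q) < P" "P < length t" "t ! Suc Q = t ! P" "t ! Q < t ! P"
    "\<And>x. Suc Q < x \<Longrightarrow> x < P \<Longrightarrow> t ! P < t ! x"
    "\<And>x. P < x \<Longrightarrow> x < length t \<Longrightarrow> t ! P < t ! x"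
    "\<forall>i. Suc Q < i \<and> i < P \<longrightarrow> \<not> Masc t i"
proof -
  define r where "r = rpos t - 1"
  have "rpos t \<noteq> 0"
    using assms(1) by (simp add: target51_def)
  then have rpos: "rpos t - 1 = r" "rpos t = Suc r"
    by (simp_all add: r_def)
  have r: "Suc r < rmin t" "2 \<le> occ_after t (Suc r) (Rmin t ! Suc r)"
    using rpos_nonzero_imp[OF \<open>rpos t \<noteq> 0\<close>] unfolding rpos by simp_all
  have QP: "Q = Prm t ! r" "P = Prm t ! Suc r"
    by (simp_all add: Q_def P_def rpos)
  have Rmin: "Rmin t ! r = t ! Q" "Rmin t ! Suc r = t ! P"
    using Rmin_nth[of r t] Rmin_nth[OF r(1)] r(1) unfolding QP by simp_all
  have rm: "rtl_min_at t Q" "rtl_min_at t P"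
    using rtl_min_at_Prm_nth[of r t] rtl_min_at_Prm_nth[OF r(1)] r(1) unfolding QP by simp_all
  define p1 where "p1 = occ_2nd_last t (t ! P)"
  have p1: "Q < p1" "p1 < P" "t ! p1 = t ! P" "occ_last t (t ! P) = P"
    using occ_2nd_last_Rmin_Suc[OF r] unfolding Rmin(2) QP[symmetric] p1_def by simp_all
  have "(Q = Suc p1 \<or> p1 = Suc Q) \<and> P \<noteq> Suc p1 \<and> \<not> (\<exists>j. p1 < j \<and> j < P \<and> Masc t j)"
    using assms(1) p1(4) occ_last_rtl_min_at[OF rm(1)]
    by (simp add: target51_def rpos(2) Rmin p1_def[symmetric])
  with p1(1) have p1_eq: "p1 = Suc Q" and "P \<noteq> Suc p1" "\<not> (\<exists>j. p1 < j \<and> j < P \<and> Masc t j)"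
    by auto
  show "Suc (Suc Q) < P" "t ! Suc Q = t ! P" "\<forall>i. Suc Q < i \<and> i < P \<longrightarrow> \<not> Masc t i"
    using p1 p1_eq \<open>P \<noteq> Suc p1\<close> \<open>\<not> (\<exists>j. p1 < j \<and> j < P \<and> Masc t j)\<close> by auto
  show "P < length t" "t ! Q < t ! P"
    using rm(2) Rmin_strict_mono[OF lessI r(1)] unfolding Rmin by (simp_all add: rtl_min_at_def)
  show "t ! P < t ! x" if "P < x" "x < length t" for x
    using rm(2) that by (simp add: rtl_min_at_def)
  show "t ! P < t ! x" if "Suc Q < x" "x < P" for x
    using Rmin_Suc_less_between_occs[OF r, of x] that p1_eq unfolding Rmin(2) QP[symmetric] p1_def
    by simp
qed

lemma target51_decomp:
  assumes "t \<in> target51 n"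
  obtains A u v B C r where "uv_shift_rmin A u v B C r" "t = A @ [u, v] @ B @ [v] @ C"
    "rpos t = Suc r" "is_ascent (A @ [u] @ B @ [u, v] @ C)"
proof -
  let ?Q = "Prm t ! (rpos t - 1)" and ?P = "Prm t ! rpos t"
  note pos = target51_positions[OF assms]
  let ?A = "take ?Q t" and ?B = "drop (Suc (Suc ?Q)) (take ?P t)" and ?C = "drop (Suc ?P) t"
  have shift: "uv_shift (t ! ?Q) (t ! ?P) ?B ?C"
    using uv_shift_T_split(1)[OF pos(1-4)] pos(5,6) by blast
  have T: "?A @ [t ! ?Q, t ! ?P] @ ?B @ [t ! ?P] @ ?C = t"
    using uv_shift_T_split(2)[OF pos(1-4)] pos(5,6) by metis
  interpret uv_shift ?A "t ! ?Q" "t ! ?P" ?B ?C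
    by (rule shift)
  obtain r where r: "r < rmin S" "Prm S ! r = k + l + 1"
    using rtl_min_at_S_seams(1) by (rule rtl_min_at_obtain_index)
  interpret uv_shift_rmin ?A "t ! ?Q" "t ! ?P" ?B ?C r
    by unfold_locales (rule r)+
  have "?Q < length t"
    using pos(1,2) by simp
  then have "Prm t ! r = ?Q" "r < rmin t"
    using Prm_T_nth[OF r(1)] rmin_T r(1) unfolding T by simp_all
  moreover have "rpos t \<noteq> 0" "rpos t < rmin t"
    using assms rpos_nonzero_imp[of t] by (auto simp: target51_def)
  ultimately have rpos: "rpos t = Suc r"
    using Prm_nth_inj[of r t "rpos t - 1"] by simp
  have "is_ascent t"
    using assms by (simp add: target51_def ascA_def)
  moreover have "k = ?Q" "k + l + 2 = ?P"
    using pos(1,2) by simp_all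
  ultimately have "is_ascent S"
    using is_ascent_S_if_T pos(7) unfolding T by simp
  with uv_shift_rmin_axioms T[symmetric] rpos show thesis
    by (rule that)
qed

lemma f51_properties:
  assumes "s \<in> T51 \<inter> ascA n"
  shows "f51 s \<in> target51 n" "g51 (f51 s) = s"
    "asc (f51 s) = asc s" "rep (f51 s) = rep s" "maxst (f51 s) = maxst s" "ealm (f51 s) = ealm s"
    "rmin (f51 s) = rmin s" "rpos (f51 s) = Suc (rpos s)"
    "zero s = zero (f51 s) + (if rpos s = 0 then 1 else 0)"
proof -
  obtain A u v B C where "uv_shift_rmin A u v B C (rpos s)" and s: "s = A @ [u] @ B @ [u, v] @ C"
    using T51_decomp assms by blast
  then interpret uv_shift_rmin A u v B C "rpos s"
    by simp
  have S: "is_ascent S" "length S = n" "rpos S = rpos s"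
    using assms s by (simp_all add: ascA_def)
  have f: "f51 s = T"
    using f51_S[OF S(3)] s by simp
  show "f51 s \<in> target51 n"
    using T_in_target51[OF S(1,3)] S(2) f by simp
  show "rpos (f51 s) = Suc (rpos s)"
    using rpos_S_eq_iff S(3) f by simp
  then show "g51 (f51 s) = s"
    using g51_T f s by simp
  show "asc (f51 s) = asc s" "rep (f51 s) = rep s" "maxst (f51 s) = maxst s" "ealm (f51 s) = ealm s"
    "rmin (f51 s) = rmin s" "zero s = zero (f51 s) + (if rpos s = 0 then 1 else 0)"
    unfolding f using asc_T rep_T maxst_T[OF S(1)] ealm_T[OF S(1)] rmin_T zero_S u_eq_0_iff[OF S(1)] s
    by simp_all
qed

lemma g51_properties:
  assumes "t \<in> target51 n"
  shows "g51 t \<in> T51 \<inter> ascA n" "f51 (g51 t) = t"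
proof -
  obtain A u v B C r where "uv_shift_rmin A u v B C r" and t: "t = A @ [u, v] @ B @ [v] @ C"
    and "rpos t = Suc r" and S: "is_ascent (A @ [u] @ B @ [u, v] @ C)"
    using target51_decomp[OF assms] by blast
  then interpret uv_shift_rmin A u v B C r
    by simp
  have g: "g51 t = S" and rpos: "rpos S = r"
    using g51_T rpos_S_eq_iff \<open>rpos t = Suc r\<close> t by simp_all
  have "length S = n"
    using assms t by (simp add: target51_def ascA_def)
  then show "g51 t \<in> T51 \<inter> ascA n"
    using S_in_T51[OF S rpos] S g by (simp add: ascA_def)
  show "f51 (g51 t) = t"
    using f51_S[OF rpos] g t by simp
qed

theorem mainTheorem13:
  fixes n :: nat
  shows "\<exists>f. bij_betw f (T51 \<inter> ascA n) (target51 n) \<and>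
    (\<forall>s \<in> T51 \<inter> ascA n.
       asc (f s) = asc s \<and> rep (f s) = rep s \<and> maxst (f s) = maxst s \<and>
       ealm (f s) = ealm s \<and> rmin (f s) = rmin s \<and>
       rpos s = rpos (f s) - 1 \<and>
       zero s = zero (f s) + (if rpos s = 0 then 1 else 0))"
proof (intro exI conjI ballI)
  show "bij_betw f51 (T51 \<inter> ascA n) (target51 n)"
    using f51_properties(1,2) g51_properties by (intro bij_betw_byWitness[where f' = g51]) blast+
qed (simp_all add: f51_properties(3-9)[of _ n])

end
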